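(* Let $d,N\in\mathbb{N}$ and let $C:\mathbb{R}^d\times\mathbb{R}^d\to\mathbb{R}$ be smooth with $C(x,x')=C(-x,-x')$ for all $x,x'$. For multi-indices $\alpha,\beta\in\mathbb{N}_0^d$ let $C_{\alpha,\beta}=\partial_{x_1}^{\alpha_1}\cdots\partial_{x_d}^{\alpha_d}\partial_{x'_1}^{\beta_1}\cdots\partial_{x'_d}^{\beta_d}C$. Let $K=\binom{N+d}{N}$ and $R=(C_{\alpha,\beta}(0,0))_{\alpha,\beta\in\mathbb{N}_0^d,\,|\alpha|,|\beta|\le N}\in\mathbb{R}^{K\times K}$, assumed invertible, let $b=R^{-1}(1,0,\dots,0)^T$ (the first coordinate corresponding to $\alpha=0$), and define $\eta(x)=\sum_{|\alpha|\le N}b_\alpha C_{\alpha,0}(0,x)$. Then $\nabla^j\eta(0)=0$ for all odd integers $j\in\mathbb{N}$.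
   Context: $\nabla^j\eta(0)$ denotes the full derivative of order $j$ (all partial derivatives of order $j$) at $0$. *)

theory Defs
  imports "HOL-Analysis.Analysis"
begin

definition dir_deriv :: "'a::real_normed_vector \<Rightarrow> ('a \<Rightarrow> real) \<Rightarrow> 'a \<Rightarrow> real" where
  "dir_deriv v f x = deriv (\<lambda>t. f (x + t *\<^sub>R v)) 0"

fun dir_derivs :: "'a::real_normed_vector list \<Rightarrow> ('a \<Rightarrow> real) \<Rightarrow> 'a \<Rightarrow> real" where
  "dir_derivs [] f = f"
| "dir_derivs (v # vs) f = dir_deriv v (dir_derivs vs f)"

definition smooth_fun :: "('a::real_normed_vector \<Rightarrow> real) \<Rightarrow> bool" where
  "smooth_fun f \<longleftrightarrow> (\<forall>vs x. dir_derivs vs f differentiable (at x))"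

definition mi_order :: "('d::finite \<Rightarrow> nat) \<Rightarrow> nat" where
  "mi_order \<alpha> = (\<Sum>i\<in>UNIV. \<alpha> i)"

definition mi_list :: "('d::finite \<Rightarrow> nat) \<Rightarrow> 'd list" where
  "mi_list \<alpha> = (SOME ds. \<forall>i. count_list ds i = \<alpha> i)"

definition xdir :: "'d::finite \<Rightarrow> (real^'d) \<times> (real^'d)" where
  "xdir i = (axis i 1, 0)"

definition ydir :: "'d::finite \<Rightarrow> (real^'d) \<times> (real^'d)" where
  "ydir i = (0, axis i 1)"

definition mixed_partial ::
  "('d::finite \<Rightarrow> nat) \<Rightarrow> ('d \<Rightarrow> nat) \<Rightarrow> ((real^'d) \<times> (real^'d) \<Rightarrow> real)
     \<Rightarrow> (real^'d) \<times> (real^'d) \<Rightarrow> real" where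
  "mixed_partial \<alpha> \<beta> C = dir_derivs (map xdir (mi_list \<alpha>) @ map ydir (mi_list \<beta>)) C"

definition multi_indices :: "nat \<Rightarrow> ('d::finite \<Rightarrow> nat) set" where
  "multi_indices N = {\<alpha>. mi_order \<alpha> \<le> N}"

end

theory Submission
  imports Defs "HOL-Library.Multiset"
begin

text \<open>Since C is even, every odd-order derivative of C vanishes at the origin. Hence
  R couples only multi-indices of equal parity, so does its inverse, and the coefficients
  b of odd order vanish. Every remaining term of an odd-order derivative of \<eta> at 0 is
  then an odd-order derivative of C at the origin.\<close>

lemma dir_derivs_append: "dir_derivs (xs @ ys) f = dir_derivs xs (dir_derivs ys f)"
  by (induction xs) auto

lemma differentiable_along_line:
  fixes D :: "'a::real_normed_vector \<Rightarrow> real"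
  assumes "D differentiable (at z)"
  shows "(\<lambda>t. D (z + t *\<^sub>R v)) differentiable (at 0)"
proof -
  have "(\<lambda>t::real. z + t *\<^sub>R v) differentiable (at 0)"
    by (auto intro!: derivative_eq_intros simp: differentiable_def)
  from differentiable_chain_at[OF this] assms show ?thesis
    by (simp add: o_def)
qed

lemma has_real_derivative_dir_deriv:
  fixes D :: "'a::real_normed_vector \<Rightarrow> real"
  assumes "D differentiable (at z)"
  shows "((\<lambda>t. D (z + t *\<^sub>R v)) has_real_derivative dir_deriv v D z) (at 0)"
  using differentiable_along_line[OF assms]
  by (simp add: dir_deriv_def DERIV_deriv_iff_real_differentiable)

lemma deriv_reflect_scaled:
  fixes g :: "real \<Rightarrow> real"
  assumes "g differentiable (at 0)"
  shows "deriv (\<lambda>t. s * g (- t)) 0 = - s * deriv g 0"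
proof -
  have "(g has_real_derivative deriv g 0) (at (- 0))"
    using assms by (simp add: DERIV_deriv_iff_real_differentiable)
  moreover have "(uminus has_real_derivative -1) (at (0::real))"
    by (auto intro!: derivative_eq_intros)
  ultimately have "((\<lambda>t. g (- t)) has_real_derivative - deriv g 0) (at 0)"
    using DERIV_chain2 by fastforce
  then have "((\<lambda>t. s * g (- t)) has_real_derivative s * - deriv g 0) (at 0)"
    by (rule DERIV_cmult)
  then show ?thesis
    by (simp add: DERIV_imp_deriv)
qed

lemma dir_derivs_even_fun:
  fixes f :: "'a::real_normed_vector \<Rightarrow> real"
  assumes smooth: "\<And>vs x. dir_derivs vs f differentiable (at x)"
    and even: "\<And>z. f (- z) = f z"
  shows "dir_derivs vs f z = (-1) ^ length vs * dir_derivs vs f (- z)"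
proof (induction vs arbitrary: z)
  case Nil
  then show ?case using even by simp
next
  case (Cons v vs)
  define D where "D = dir_derivs vs f"
  define s :: real where "s = (-1) ^ length vs"
  define g where "g = (\<lambda>t. D (- z + t *\<^sub>R v))"
  have "(\<lambda>t. D (z + t *\<^sub>R v)) = (\<lambda>t. s * g (- t))"
  proof
    fix t
    have "D (z + t *\<^sub>R v) = s * D (- (z + t *\<^sub>R v))"
      using Cons.IH unfolding D_def s_def by blast
    also have "- (z + t *\<^sub>R v) = - z + (- t) *\<^sub>R v"
      by simp
    finally show "D (z + t *\<^sub>R v) = s * g (- t)"
      by (simp only: g_def)
  qed
  moreover have "g differentiable (at 0)"
    unfolding g_def D_def by (rule differentiable_along_line[OF smooth])
  ultimately have "deriv (\<lambda>t. D (z + t *\<^sub>R v)) 0 = - s * deriv g 0"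
    by (simp add: deriv_reflect_scaled)
  then show ?case
    by (simp add: dir_deriv_def D_def g_def s_def)
qed

lemma dir_derivs_even_fun_odd_at_0:
  fixes f :: "'a::real_normed_vector \<Rightarrow> real"
  assumes "\<And>vs x. dir_derivs vs f differentiable (at x)"
    and "\<And>z. f (- z) = f z"
    and "odd (length vs)"
  shows "dir_derivs vs f 0 = 0"
  using dir_derivs_even_fun[of f vs 0] assms by simp

lemma dir_derivs_sum_scaled:
  fixes g :: "'i \<Rightarrow> 'a::real_normed_vector \<Rightarrow> real"
  assumes smooth: "\<And>\<alpha> vs x. \<alpha> \<in> A \<Longrightarrow> dir_derivs vs (g \<alpha>) differentiable (at x)"
  shows "dir_derivs ws (\<lambda>x. \<Sum>\<alpha>\<in>A. b \<alpha> * g \<alpha> x)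
    = (\<lambda>x. \<Sum>\<alpha>\<in>A. b \<alpha> * dir_derivs ws (g \<alpha>) x)"
proof (induction ws)
  case Nil
  then show ?case by simp
next
  case (Cons w ws)
  show ?case
  proof
    fix x
    have "((\<lambda>t. \<Sum>\<alpha>\<in>A. b \<alpha> * dir_derivs ws (g \<alpha>) (x + t *\<^sub>R w)) has_real_derivative
        (\<Sum>\<alpha>\<in>A. b \<alpha> * dir_derivs (w # ws) (g \<alpha>) x)) (at 0)"
      using has_real_derivative_dir_deriv[OF smooth]
      by (auto intro!: DERIV_sum DERIV_cmult)
    then show "dir_derivs (w # ws) (\<lambda>x. \<Sum>\<alpha>\<in>A. b \<alpha> * g \<alpha> x) x
        = (\<Sum>\<alpha>\<in>A. b \<alpha> * dir_derivs (w # ws) (g \<alpha>) x)"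
      by (simp add: Cons.IH dir_deriv_def DERIV_imp_deriv)
  qed
qed

lemma dir_derivs_slice:
  fixes F :: "'a::real_normed_vector \<times> 'b::real_normed_vector \<Rightarrow> real"
  shows "dir_derivs ws (\<lambda>x. F (0, x)) x = dir_derivs (map (\<lambda>w. (0, w)) ws) F (0, x)"
proof (induction ws arbitrary: x)
  case Nil
  then show ?case by simp
next
  case (Cons w ws)
  then have "dir_derivs ws (\<lambda>x. F (0, x)) = (\<lambda>x. dir_derivs (map (\<lambda>w. (0, w)) ws) F (0, x))"
    by auto
  then show ?case by (simp add: dir_deriv_def)
qed

lemma dir_derivs_slice_differentiable:
  fixes F :: "'a::real_normed_vector \<times> 'b::real_normed_vector \<Rightarrow> real"
  assumes smooth: "\<And>vs z. dir_derivs vs F differentiable (at z)"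
  shows "dir_derivs ws (\<lambda>x. dir_derivs us F (0, x)) differentiable (at x)"
proof -
  have "(\<lambda>x::'b. (0::'a, x)) differentiable (at x)"
    by (auto intro!: derivative_eq_intros simp: differentiable_def)
  from differentiable_chain_at[OF this smooth]
  have "(\<lambda>x. dir_derivs (map (\<lambda>w. (0, w)) ws @ us) F (0, x)) differentiable (at x)"
    by (simp add: o_def)
  moreover have "dir_derivs ws (\<lambda>x. dir_derivs us F (0, x))
      = (\<lambda>x. dir_derivs (map (\<lambda>w. (0, w)) ws @ us) F (0, x))"
    by (simp add: dir_derivs_slice dir_derivs_append fun_eq_iff)
  ultimately show ?thesis
    by simp
qed

lemma count_mi_list: "count_list (mi_list \<alpha>) i = \<alpha> i"
proof -
  obtain xs where "mset xs = Abs_multiset \<alpha>"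
    using ex_mset by blast
  then have "\<forall>i. count_list xs i = \<alpha> i"
    by (metis count_mset count_Abs_multiset finite)
  then show ?thesis
    unfolding mi_list_def by (rule someI[where P = "\<lambda>ds. \<forall>i. count_list ds i = \<alpha> i", THEN spec])
qed

lemma length_mi_list: "length (mi_list \<alpha>) = mi_order \<alpha>"
  using sum_count_set[of "mi_list \<alpha>" UNIV] by (simp add: mi_order_def count_mi_list)

lemma mi_list_zero: "mi_list (\<lambda>_. 0) = []"
  using length_mi_list[of "\<lambda>_. 0"] by (simp add: mi_order_def)

lemma zero_in_multi_indices: "(\<lambda>_. 0) \<in> multi_indices N"
  by (simp add: multi_indices_def mi_order_def)

lemma finite_multi_indices: "finite (multi_indices N :: ('d::finite \<Rightarrow> nat) set)"
proof (rule finite_subset)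
  show "multi_indices N \<subseteq> PiE (UNIV :: 'd set) (\<lambda>_. {0..N})"
  proof
    fix \<alpha> :: "'d \<Rightarrow> nat"
    assume "\<alpha> \<in> multi_indices N"
    then have "mi_order \<alpha> \<le> N"
      by (simp add: multi_indices_def)
    moreover have "\<alpha> i \<le> mi_order \<alpha>" for i
      unfolding mi_order_def by (rule member_le_sum) auto
    ultimately have "\<alpha> i \<le> N" for i
      using order_trans by blast
    then show "\<alpha> \<in> PiE UNIV (\<lambda>_. {0..N})"
      by (simp add: PiE_UNIV_domain)
  qed
qed (rule finite_PiE, auto)

lemma left_inverse_eq_right_inverse:
  fixes A L M :: "'i \<Rightarrow> 'i \<Rightarrow> 'r::comm_ring_1"
  assumes "finite I"
    and left: "\<And>\<alpha> \<beta>. \<alpha> \<in> I \<Longrightarrow> \<beta> \<in> I \<Longrightarrow> (\<Sum>\<gamma>\<in>I. L \<alpha> \<gamma> * A \<gamma> \<beta>) = (if \<alpha> = \<beta> then 1 else 0)"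
    and right: "\<And>\<alpha> \<beta>. \<alpha> \<in> I \<Longrightarrow> \<beta> \<in> I \<Longrightarrow> (\<Sum>\<gamma>\<in>I. A \<alpha> \<gamma> * M \<gamma> \<beta>) = (if \<alpha> = \<beta> then 1 else 0)"
    and "\<alpha> \<in> I" "\<beta> \<in> I"
  shows "L \<alpha> \<beta> = M \<alpha> \<beta>"
proof -
  have "L \<alpha> \<beta> = (\<Sum>\<gamma>\<in>I. L \<alpha> \<gamma> * (if \<gamma> = \<beta> then 1 else 0))"
    using assms(1,5) by (simp add: if_distrib cong: if_cong)
  also have "\<dots> = (\<Sum>\<gamma>\<in>I. L \<alpha> \<gamma> * (\<Sum>\<delta>\<in>I. A \<gamma> \<delta> * M \<delta> \<beta>))"
    using right \<open>\<beta> \<in> I\<close> by simp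
  also have "\<dots> = (\<Sum>\<gamma>\<in>I. \<Sum>\<delta>\<in>I. L \<alpha> \<gamma> * A \<gamma> \<delta> * M \<delta> \<beta>)"
    by (simp add: sum_distrib_left mult.assoc)
  also have "\<dots> = (\<Sum>\<delta>\<in>I. (\<Sum>\<gamma>\<in>I. L \<alpha> \<gamma> * A \<gamma> \<delta>) * M \<delta> \<beta>)"
    by (subst sum.swap) (simp add: sum_distrib_right)
  also have "\<dots> = (\<Sum>\<delta>\<in>I. (if \<alpha> = \<delta> then M \<delta> \<beta> else 0))"
    using left \<open>\<alpha> \<in> I\<close> by (intro sum.cong) auto
  also have "\<dots> = M \<alpha> \<beta>"
    using assms(1,4) by simp
  finally show ?thesis .
qed

lemma inverse_of_block_diagonal:
  fixes A L M :: "'i \<Rightarrow> 'i \<Rightarrow> 'r::comm_ring_1" and p :: "'i \<Rightarrow> 'c"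
  assumes "finite I"
    and blocks: "\<And>\<alpha> \<beta>. p \<alpha> \<noteq> p \<beta> \<Longrightarrow> A \<alpha> \<beta> = 0"
    and left: "\<And>\<alpha> \<beta>. \<alpha> \<in> I \<Longrightarrow> \<beta> \<in> I \<Longrightarrow> (\<Sum>\<gamma>\<in>I. L \<alpha> \<gamma> * A \<gamma> \<beta>) = (if \<alpha> = \<beta> then 1 else 0)"
    and right: "\<And>\<alpha> \<beta>. \<alpha> \<in> I \<Longrightarrow> \<beta> \<in> I \<Longrightarrow> (\<Sum>\<gamma>\<in>I. A \<alpha> \<gamma> * L \<gamma> \<beta>) = (if \<alpha> = \<beta> then 1 else 0)"
    and "\<alpha> \<in> I" "\<beta> \<in> I" "p \<alpha> \<noteq> p \<beta>"
  shows "L \<alpha> \<beta> = 0"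
proof -
  define M where "M = (\<lambda>\<alpha> \<beta>. if p \<alpha> = p \<beta> then L \<alpha> \<beta> else 0)"
  have "(\<Sum>\<gamma>\<in>I. A \<alpha> \<gamma> * M \<gamma> \<beta>) = (if \<alpha> = \<beta> then 1 else 0)"
    if "\<alpha> \<in> I" "\<beta> \<in> I" for \<alpha> \<beta>
  proof (cases "p \<alpha> = p \<beta>")
    case True
    then have "(\<Sum>\<gamma>\<in>I. A \<alpha> \<gamma> * M \<gamma> \<beta>) = (\<Sum>\<gamma>\<in>I. A \<alpha> \<gamma> * L \<gamma> \<beta>)"
      by (intro sum.cong) (auto simp: M_def blocks)
    with right that show ?thesis by simp
  next
    case False
    then show ?thesis
      by (auto simp: M_def blocks intro!: sum.neutral)
  qed
  from left_inverse_eq_right_inverse[OF assms(1) left this assms(5,6)] assms(7)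
  show ?thesis by (simp add: M_def)
qed

lemma mixed_partial_at_0_parity:
  fixes C :: "(real^'d) \<times> (real^'d) \<Rightarrow> real"
  assumes "smooth_fun C" "\<And>z. C (- z) = C z"
    and "even (mi_order \<alpha>) \<noteq> even (mi_order \<beta>)"
  shows "mixed_partial \<alpha> \<beta> C (0, 0) = 0"
  using dir_derivs_even_fun_odd_at_0[of C "map xdir (mi_list \<alpha>) @ map ydir (mi_list \<beta>)"] assms
  by (auto simp: smooth_fun_def mixed_partial_def length_mi_list zero_prod_def)

theorem mainTheorem5:
  fixes N :: nat
    and C :: "(real^'d) \<times> (real^'d) \<Rightarrow> real"
    and Rinv :: "('d \<Rightarrow> nat) \<Rightarrow> ('d \<Rightarrow> nat) \<Rightarrow> real"
  assumes smooth: "smooth_fun C"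
    and sym: "\<And>x x'. C (x, x') = C (-x, -x')"
    and inv_right: "\<And>\<alpha> \<beta>. \<alpha> \<in> multi_indices N \<Longrightarrow> \<beta> \<in> multi_indices N \<Longrightarrow>
        (\<Sum>\<gamma>\<in>multi_indices N. mixed_partial \<alpha> \<gamma> C (0, 0) * Rinv \<gamma> \<beta>)
          = (if \<alpha> = \<beta> then 1 else 0)"
    and inv_left: "\<And>\<alpha> \<beta>. \<alpha> \<in> multi_indices N \<Longrightarrow> \<beta> \<in> multi_indices N \<Longrightarrow>
        (\<Sum>\<gamma>\<in>multi_indices N. Rinv \<alpha> \<gamma> * mixed_partial \<gamma> \<beta> C (0, 0))
          = (if \<alpha> = \<beta> then 1 else 0)"
  shows "let b = (\<lambda>\<alpha>. Rinv \<alpha> (\<lambda>_. 0));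
             \<eta> = (\<lambda>x. \<Sum>\<alpha>\<in>multi_indices N. b \<alpha> * mixed_partial \<alpha> (\<lambda>_. 0) C (0, x))
         in \<forall>j. odd j \<longrightarrow> (\<forall>ds :: 'd list. length ds = j \<longrightarrow>
              dir_derivs (map (\<lambda>i. axis i 1) ds) \<eta> 0 = 0)"
proof -
  have smoothC: "\<And>vs x. dir_derivs vs C differentiable (at x)"
    using smooth unfolding smooth_fun_def by blast
  have even: "C (- z) = C z" for z
    using sym[of "fst z" "snd z"] by (cases z) simp
  have b_odd: "Rinv \<alpha> (\<lambda>_. 0) = 0" if "\<alpha> \<in> multi_indices N" "odd (mi_order \<alpha>)" for \<alpha>
    using inverse_of_block_diagonal[where p = "\<lambda>\<alpha>. even (mi_order \<alpha>)", OF finite_multi_indices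
        mixed_partial_at_0_parity[of C, OF smooth even] inv_left inv_right that(1) zero_in_multi_indices]
      that(2) by (simp add: mi_order_def)
  have slice: "dir_derivs ws (\<lambda>x. mixed_partial \<alpha> (\<lambda>_. 0) C (0, x)) x
      = dir_derivs (map (\<lambda>w. (0, w)) ws @ map xdir (mi_list \<alpha>)) C (0, x)" for ws \<alpha> x
    by (simp add: mixed_partial_def mi_list_zero dir_derivs_slice dir_derivs_append)
  have term_0: "Rinv \<alpha> (\<lambda>_. 0) * dir_derivs ws (\<lambda>x. mixed_partial \<alpha> (\<lambda>_. 0) C (0, x)) 0 = 0"
    if "\<alpha> \<in> multi_indices N" "odd (length ws)" for \<alpha> and ws :: "(real^'d) list"
    using b_odd[OF that(1)] dir_derivs_even_fun_odd_at_0[of C, OF smoothC even] that(2)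
    by (cases "odd (mi_order \<alpha>)") (simp_all add: slice length_mi_list zero_prod_def)
  have smooth_slice: "dir_derivs vs (\<lambda>x. mixed_partial \<alpha> (\<lambda>_. 0) C (0, x)) differentiable (at x)"
    for vs \<alpha> x
    unfolding mixed_partial_def by (rule dir_derivs_slice_differentiable[OF smoothC])
  show ?thesis
    unfolding Let_def
  proof (intro allI impI)
    fix j and ds :: "'d list"
    assume "odd j" "length ds = j"
    then have odd: "odd (length (map (\<lambda>i. axis i 1) ds :: (real^'d) list))"
      by simp
    show "dir_derivs (map (\<lambda>i. axis i 1) ds)
        (\<lambda>x. \<Sum>\<alpha>\<in>multi_indices N. Rinv \<alpha> (\<lambda>_. 0) * mixed_partial \<alpha> (\<lambda>_. 0) C (0, x)) 0 = 0"
      unfolding dir_derivs_sum_scaled[OF smooth_slice]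
      by (intro sum.neutral ballI term_0 odd)
  qed
qed

end
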